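(* Let $m\ge 2$ be an integer and $\alpha\in(0,1)$. There exists a nonzero finite Borel measure $\mu$ on $\mathbb{T}$ such that $\operatorname{ess\,sup}_{x} \Theta^{\alpha,*}(\mu,x)<\infty$, $\operatorname{ess\,inf}_{x}\Theta_{\alpha,*}(\mu,x)>0$ (essential supremum/infimum with respect to $\mu$), and $$\mathcal{C}(\mu,\alpha) \leq \frac{\lceil m^{\alpha}\rceil}{\lfloor m^{\alpha}\rfloor}.$$
   Context: Fix an integer $m\ge 2$ and let $\mathbb{T}=\{0,1,\dots,m-1\}^{\mathbb{N}}$ be the set of infinite sequences with entries in $\{0,\dots,m-1\}$. For distinct $a,b\in\mathbb{T}$ let $n(a,b)$ be the first index at which they differ and set $d(a,b)=m^{-n(a,b)+1}$ ($d(a,a)=0$). For an integer $n\ge0$ and $x\in\mathbb{T}$, $B_n(x)=B(x,m^{-n})$ is the set of sequences agreeing with $x$ in the first $n$ positions (an interval of level $n$). For a Borel measure $\mu$ on $\mathbb{T}$ and $\alpha>0$: $\Theta^{\alpha,*}(\mu,x)=\limsup_{n\to\infty} m^{\alpha n}\mu(B_n(x))$ and $\Theta_{\alpha,*}(\mu,x)=\liminf_{n\to\infty} m^{\alpha n}\mu(B_n(x))$. Define $\mathcal{C}(\mu,\alpha)=\dfrac{\operatorname{ess\,sup}_{x\in\mathbb{T}}\Theta^{\alpha,*}(\mu,x)}{\operatorname{ess\,inf}_{x\in\mathbb{T}}\Theta_{\alpha,*}(\mu,x)}$ (with respect to $\mu$) whenever the numerator is finite and the denominator positive. $\lfloor\cdot\rfloor,\lceil\cdot\rceil$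 denote floor and ceiling. *)

theory Defs
  imports "HOL-Analysis.Analysis" "HOL-Probability.Essential_Supremum"
begin

definition seqspace :: "nat \<Rightarrow> (nat \<Rightarrow> nat) set" where
  "seqspace m = {x. \<forall>i. x i < m}"

text \<open>Interval of level n: sequences agreeing with x in the first n positions
  (= the ball B(x, m^-n) for the metric d).\<close>
definition cyl :: "nat \<Rightarrow> nat \<Rightarrow> (nat \<Rightarrow> nat) \<Rightarrow> (nat \<Rightarrow> nat) set" where
  "cyl m n x = {y \<in> seqspace m. \<forall>i<n. y i = x i}"

text \<open>The Borel sigma-algebra of the ultrametric d on T: it is generated by the
  balls, i.e. by the intervals (cylinders), since T is separable and every open set
  is a countable union of intervals.\<close>
definition borelT :: "nat \<Rightarrow> (nat \<Rightarrow> nat) set set" where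
  "borelT m = sigma_sets (seqspace m) {cyl m n x | n x. x \<in> seqspace m}"

definition upper_density :: "nat \<Rightarrow> (nat \<Rightarrow> nat) measure \<Rightarrow> real \<Rightarrow> (nat \<Rightarrow> nat) \<Rightarrow> ereal" where
  "upper_density m \<mu> \<alpha> x =
     limsup (\<lambda>n. ereal (real m powr (\<alpha> * real n) * measure \<mu> (cyl m n x)))"

definition lower_density :: "nat \<Rightarrow> (nat \<Rightarrow> nat) measure \<Rightarrow> real \<Rightarrow> (nat \<Rightarrow> nat) \<Rightarrow> ereal" where
  "lower_density m \<mu> \<alpha> x =
     liminf (\<lambda>n. ereal (real m powr (\<alpha> * real n) * measure \<mu> (cyl m n x)))"

definition essinf :: "'a measure \<Rightarrow> ('a \<Rightarrow> ereal) \<Rightarrow> ereal" where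
  "essinf M f = - esssup M (\<lambda>x. - f x)"

definition Cconst :: "nat \<Rightarrow> (nat \<Rightarrow> nat) measure \<Rightarrow> real \<Rightarrow> real" where
  "Cconst m \<mu> \<alpha> = real_of_ereal (esssup \<mu> (upper_density m \<mu> \<alpha>))
                  / real_of_ereal (essinf \<mu> (lower_density m \<mu> \<alpha>))"

end

theory Submission
  imports Defs "HOL-Probability.Probability"
begin

(* Write a = m powr alpha, so that 1 < a < m.  The measure is a Cantor-type product measure:
  digit i is uniform on {0..<k i}, where every k i is either floor a or ceiling a, so a cylinder
  of level n around a typical point has mass 1 / (k 0 * ... * k (n-1)).  Choosing the k i greedily
  (ceiling a while the product lags behind a^n, floor a otherwise) keeps the product within the
  factors floor a / a and ceiling a / a of a^n, so m^(alpha n) times the cylinder mass stays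
  between a / ceiling a and a / floor a at every level, almost everywhere. *)

definition prefix :: "nat \<Rightarrow> (nat \<Rightarrow> nat) \<Rightarrow> nat \<Rightarrow> nat" where
  "prefix n x = (\<lambda>i. if i < n then x i else 0)"

lemma cyl_prefix: "cyl m n (prefix n x) = cyl m n x"
  by (auto simp: cyl_def prefix_def)

lemma prefix_in_seqspace: "0 < m \<Longrightarrow> x \<in> seqspace m \<Longrightarrow> prefix n x \<in> seqspace m"
  by (auto simp: prefix_def seqspace_def)

lemma finite_prefix_image: "finite (prefix n ` seqspace m)"
proof (rule finite_subset)
  show "prefix n ` seqspace m \<subseteq>
      {g. \<forall>i. (i \<in> {..<n} \<longrightarrow> g i \<in> {..<m}) \<and> (i \<notin> {..<n} \<longrightarrow> g i = 0)}"
    by (auto simp: prefix_def seqspace_def)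
qed (rule finite_set_of_finite_funs, auto)

lemma sigma_algebra_borelT: "sigma_algebra (seqspace m) (borelT m)"
  unfolding borelT_def by (rule sigma_algebra_sigma_sets) (auto simp: cyl_def)

lemma cyl_in_borelT: "x \<in> seqspace m \<Longrightarrow> cyl m n x \<in> borelT m"
  unfolding borelT_def by (blast intro: sigma_sets.Basic)

lemma prefix_determined_in_borelT:
  assumes "0 < m"
  shows "{x \<in> seqspace m. P (prefix n x)} \<in> borelT m"
proof -
  have "{x \<in> seqspace m. P (prefix n x)} = (\<Union>y\<in>{y \<in> prefix n ` seqspace m. P y}. cyl m n y)"
  proof (intro equalityI subsetI)
    fix x assume "x \<in> {x \<in> seqspace m. P (prefix n x)}"
    then show "x \<in> (\<Union>y\<in>{y \<in> prefix n ` seqspace m. P y}. cyl m n y)"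
      by (intro UN_I[of "prefix n x"]) (auto simp: cyl_def prefix_def)
  next
    fix x assume "x \<in> (\<Union>y\<in>{y \<in> prefix n ` seqspace m. P y}. cyl m n y)"
    then obtain z where "x \<in> cyl m n (prefix n z)" "P (prefix n z)" by blast
    moreover from this(1) have "prefix n x = prefix n z" by (auto simp: cyl_def prefix_def)
    ultimately show "x \<in> {x \<in> seqspace m. P (prefix n x)}" by (auto simp: cyl_def)
  qed
  also have "\<dots> \<in> borelT m"
  proof -
    interpret sigma_algebra "seqspace m" "borelT m"
      by (rule sigma_algebra_borelT)
    show ?thesis
      using finite_prefix_image assms by (auto intro!: finite_UN cyl_in_borelT prefix_in_seqspace)
  qed
  finally show ?thesis .
qed

lemma cylinder_set_in_borelT:
  "0 < m \<Longrightarrow> {x \<in> seqspace m. \<forall>i<n. x i \<in> A i} \<in> borelT m"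
  using prefix_determined_in_borelT[of m "\<lambda>y. \<forall>i<n. y i \<in> A i" n] by (simp add: prefix_def)

lemma measurable_prefix_determined:
  fixes h :: "(nat \<Rightarrow> nat) \<Rightarrow> 'b::topological_space"
  assumes "0 < m" "space M = seqspace m" "sets M = borelT m"
    and "\<And>x. x \<in> seqspace m \<Longrightarrow> h x = F (prefix n x)"
  shows "h \<in> borel_measurable M"
proof (rule measurableI)
  fix A :: "'b set"
  have "h -` A \<inter> space M = {x \<in> seqspace m. F (prefix n x) \<in> A}"
    using assms(2,4) by auto
  then show "h -` A \<inter> space M \<in> sets M"
    using prefix_determined_in_borelT[OF assms(1)] assms(3) by simp
qed auto

lemma real_of_ereal_divide_le:
  fixes X Y :: ereal
  assumes "X \<le> ereal U" "ereal L \<le> Y" "0 < L" "0 \<le> U"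
  shows "real_of_ereal X / real_of_ereal Y \<le> U / L"
proof (cases Y)
  case (real r)
  have "real_of_ereal X \<le> U"
    using assms(1,4) by (cases X) auto
  then have "real_of_ereal X / r \<le> U / r"
    using real assms by (intro divide_right_mono) auto
  also have "\<dots> \<le> U / L"
    using real assms by (intro divide_left_mono) auto
  finally show ?thesis using real by simp
qed (use assms in auto)

context
  fixes m :: nat and \<mu> :: "(nat \<Rightarrow> nat) measure" and \<alpha> :: real
  assumes m: "0 < m" and space_\<mu>: "space \<mu> = seqspace m" and sets_\<mu>: "sets \<mu> = borelT m"
begin

lemma measurable_scaled_cyl_measure:
  "(\<lambda>x. ereal (real m powr (\<alpha> * real n) * measure \<mu> (cyl m n x))) \<in> borel_measurable \<mu>"
  by (rule measurable_prefix_determined[OF m space_\<mu> sets_\<mu>, where n = n and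
        F = "\<lambda>y. ereal (real m powr (\<alpha> * real n) * measure \<mu> (cyl m n y))"])
     (simp add: cyl_prefix)

lemma esssup_upper_density_le:
  assumes "AE x in \<mu>. \<forall>n. real m powr (\<alpha> * real n) * measure \<mu> (cyl m n x) \<le> U"
  shows "esssup \<mu> (upper_density m \<mu> \<alpha>) \<le> ereal U"
proof (rule esssup_I)
  show "upper_density m \<mu> \<alpha> \<in> borel_measurable \<mu>"
    unfolding upper_density_def[abs_def]
    by (rule borel_measurable_limsup[OF measurable_scaled_cyl_measure])
  show "AE x in \<mu>. upper_density m \<mu> \<alpha> x \<le> ereal U"
    using assms by eventually_elim (auto simp: upper_density_def intro!: Limsup_bounded)
qed

lemma essinf_lower_density_ge:
  assumes "AE x in \<mu>. \<forall>n. L \<le> real m powr (\<alpha> * real n) * measure \<mu> (cyl m n x)"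
  shows "ereal L \<le> essinf \<mu> (lower_density m \<mu> \<alpha>)"
proof -
  have "(\<lambda>x. - lower_density m \<mu> \<alpha> x) \<in> borel_measurable \<mu>"
    unfolding lower_density_def
    using borel_measurable_liminf[OF measurable_scaled_cyl_measure] by measurable
  moreover have "AE x in \<mu>. ereal L \<le> lower_density m \<mu> \<alpha> x"
    using assms by eventually_elim (auto simp: lower_density_def intro!: Liminf_bounded)
  then have "AE x in \<mu>. - lower_density m \<mu> \<alpha> x \<le> - ereal L"
    by eventually_elim (simp only: ereal_minus_le_minus)
  ultimately have "esssup \<mu> (\<lambda>x. - lower_density m \<mu> \<alpha> x) \<le> - ereal L"
    by (rule esssup_I)
  then show ?thesis
    unfolding essinf_def by (metis ereal_minus_le_minus ereal_uminus_uminus)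
qed

lemma essential_density_bounds:
  assumes "AE x in \<mu>. \<forall>n. L \<le> real m powr (\<alpha> * real n) * measure \<mu> (cyl m n x) \<and>
                         real m powr (\<alpha> * real n) * measure \<mu> (cyl m n x) \<le> U"
    and "0 < L" "L \<le> U"
  shows "esssup \<mu> (upper_density m \<mu> \<alpha>) < \<infinity>" "0 < essinf \<mu> (lower_density m \<mu> \<alpha>)"
    and "Cconst m \<mu> \<alpha> \<le> U / L"
proof -
  have "AE x in \<mu>. \<forall>n. real m powr (\<alpha> * real n) * measure \<mu> (cyl m n x) \<le> U"
    using assms(1) by eventually_elim blast
  then have upper: "esssup \<mu> (upper_density m \<mu> \<alpha>) \<le> ereal U"
    by (rule esssup_upper_density_le)
  have "AE x in \<mu>. \<forall>n. L \<le> real m powr (\<alpha> * real n) * measure \<mu> (cyl m n x)"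
    using assms(1) by eventually_elim blast
  then have lower: "ereal L \<le> essinf \<mu> (lower_density m \<mu> \<alpha>)"
    by (rule essinf_lower_density_ge)
  show "esssup \<mu> (upper_density m \<mu> \<alpha>) < \<infinity>"
    by (rule le_less_trans[OF upper]) simp
  show "0 < essinf \<mu> (lower_density m \<mu> \<alpha>)"
    using \<open>0 < L\<close> by (intro less_le_trans[OF _ lower]) simp
  show "Cconst m \<mu> \<alpha> \<le> U / L"
    unfolding Cconst_def using upper lower assms(2,3) by (intro real_of_ereal_divide_le) auto
qed

end

(* Reducing the coordinates mod m only serves to land in seqspace m; when every k i \<le> m
  it changes nothing on the support of the product measure. *)
definition digit_measure :: "nat \<Rightarrow> (nat \<Rightarrow> nat) \<Rightarrow> (nat \<Rightarrow> nat) measure" where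
  "digit_measure m k =
     distr (PiM UNIV (\<lambda>i. measure_pmf (pmf_of_set {0..<k i})))
       (sigma (seqspace m) {cyl m n x | n x. x \<in> seqspace m}) (\<lambda>w i. w i mod m)"

lemma space_digit_measure: "space (digit_measure m k) = seqspace m"
  by (simp add: digit_measure_def space_measure_of_conv cyl_def)

lemma sets_sigma_cylinders: "sets (sigma (seqspace m) {cyl m n x | n x. x \<in> seqspace m}) = borelT m"
  by (auto simp: borelT_def cyl_def intro!: sets_measure_of)

lemma sets_digit_measure: "sets (digit_measure m k) = borelT m"
  by (simp add: digit_measure_def sets_sigma_cylinders)

lemma emeasure_digit_measure_cylinder_set:
  assumes m: "0 < m"
  shows "emeasure (digit_measure m k) {x \<in> seqspace m. \<forall>i<n. x i \<in> A i}
     = (\<Prod>i<n. emeasure (measure_pmf (pmf_of_set {0..<k i})) {y. y mod m \<in> A i})"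
proof -
  let ?P = "PiM UNIV (\<lambda>i. measure_pmf (pmf_of_set {0..<k i}))"
  let ?T = "sigma (seqspace m) {cyl m n x | n x. x \<in> seqspace m}"
  have into_seqspace: "(\<lambda>i. w i mod m) \<in> seqspace m" for w
    using m by (simp add: seqspace_def)
  have preimage: "(\<lambda>w i. w i mod m) -` {x \<in> seqspace m. \<forall>i<n. x i \<in> A i} \<inter> space ?P
      = prod_emb UNIV (\<lambda>i. measure_pmf (pmf_of_set {0..<k i})) {..<n}
          (PiE {..<n} (\<lambda>i. {y. y mod m \<in> A i}))" for n A
  proof -
    have "space ?P = UNIV"
      by (simp add: space_PiM)
    then show ?thesis
      using into_seqspace by (auto simp: prod_emb_def restrict_PiE_iff)
  qed
  have preimage_in_sets:
    "(\<lambda>w i. w i mod m) -` {x \<in> seqspace m. \<forall>i<n. x i \<in> A i} \<inter> space ?P \<in> sets ?P" for n A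
    unfolding preimage by (rule sets_PiM_I) auto
  have "(\<lambda>w i. w i mod m) \<in> measurable ?P ?T"
  proof (rule measurable_measure_of)
    show "{cyl m n x | n x. x \<in> seqspace m} \<subseteq> Pow (seqspace m)"
      by (auto simp: cyl_def)
    show "(\<lambda>w i. w i mod m) \<in> space ?P \<rightarrow> seqspace m"
      using into_seqspace by blast
  next
    fix C assume "C \<in> {cyl m n x | n x. x \<in> seqspace m}"
    then obtain n x where "C = cyl m n x"
      by blast
    then have "C = {z \<in> seqspace m. \<forall>i<n. z i \<in> {x i}}"
      by (simp add: cyl_def)
    then show "(\<lambda>w i. w i mod m) -` C \<inter> space ?P \<in> sets ?P"
      using preimage_in_sets[of n "\<lambda>i. {x i}"] by (simp only:)
  qed
  moreover have "{x \<in> seqspace m. \<forall>i<n. x i \<in> A i} \<in> sets ?T"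
    unfolding sets_sigma_cylinders by (rule cylinder_set_in_borelT[OF m])
  ultimately have "emeasure (digit_measure m k) {x \<in> seqspace m. \<forall>i<n. x i \<in> A i}
      = emeasure ?P (prod_emb UNIV (\<lambda>i. measure_pmf (pmf_of_set {0..<k i})) {..<n}
          (PiE {..<n} (\<lambda>i. {y. y mod m \<in> A i})))"
    unfolding digit_measure_def by (simp only: emeasure_distr preimage)
  also have "\<dots> = (\<Prod>i<n. emeasure (measure_pmf (pmf_of_set {0..<k i})) {y. y mod m \<in> A i})"
    by (rule emeasure_PiM_emb) (auto simp: prob_space_measure_pmf)
  finally show ?thesis .
qed

lemma emeasure_digit_measure_space: "0 < m \<Longrightarrow> emeasure (digit_measure m k) (seqspace m) = 1"
  using emeasure_digit_measure_cylinder_set[where n = 0 and A = "\<lambda>_. UNIV"] by simp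

context
  fixes m :: nat and k :: "nat \<Rightarrow> nat"
  assumes m: "0 < m" and k_pos: "\<And>i. 0 < k i" and k_le: "\<And>i. k i \<le> m"
begin

lemma AE_digit_measure_digits: "AE x in digit_measure m k. \<forall>i. x i < k i"
proof (subst AE_all_countable, intro allI)
  fix n
  define A where "A i = (if i = n then {k n..} else UNIV)" for i
  have "{x \<in> seqspace m. \<forall>i<Suc n. x i \<in> A i} \<in> null_sets (digit_measure m k)"
  proof (rule null_setsI)
    have "{0..<k n} \<inter> {y. y mod m \<in> A n} = {}"
      using k_le[of n] by (auto simp: A_def)
    then have "emeasure (measure_pmf (pmf_of_set {0..<k n})) {y. y mod m \<in> A n} = 0"
      using k_pos[of n] by (simp add: emeasure_pmf_of_set)
    then show "emeasure (digit_measure m k) {x \<in> seqspace m. \<forall>i<Suc n. x i \<in> A i} = 0"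
      by (simp add: emeasure_digit_measure_cylinder_set[OF m])
    show "{x \<in> seqspace m. \<forall>i<Suc n. x i \<in> A i} \<in> sets (digit_measure m k)"
      using cylinder_set_in_borelT[OF m] by (simp add: sets_digit_measure)
  qed
  then show "AE x in digit_measure m k. x n < k n"
    by (rule AE_I') (auto simp: space_digit_measure A_def less_Suc_eq)
qed

lemma measure_digit_measure_cyl:
  assumes "x \<in> seqspace m" "\<forall>i. x i < k i"
  shows "measure (digit_measure m k) (cyl m n x) = 1 / real (\<Prod>i<n. k i)"
proof -
  have digit: "emeasure (measure_pmf (pmf_of_set {0..<k i})) {y. y mod m \<in> {x i}}
      = ennreal (1 / real (k i))" for i
  proof -
    have "{0..<k i} \<inter> {y. y mod m \<in> {x i}} = {x i}"
      using assms k_le[of i] by (auto dest: spec[of _ i])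
    then show ?thesis
      using k_pos[of i]
      by (simp add: emeasure_pmf_of_set ennreal_of_nat_eq_real_of_nat divide_ennreal)
  qed
  have "cyl m n x = {z \<in> seqspace m. \<forall>i<n. z i \<in> {x i}}"
    by (auto simp: cyl_def)
  then have "emeasure (digit_measure m k) (cyl m n x)
      = (\<Prod>i<n. emeasure (measure_pmf (pmf_of_set {0..<k i})) {y. y mod m \<in> {x i}})"
    by (simp only: emeasure_digit_measure_cylinder_set[OF m])
  also have "\<dots> = (\<Prod>i<n. ennreal (1 / real (k i)))"
    by (simp only: digit)
  also have "\<dots> = ennreal (1 / (\<Prod>i<n. real (k i)))"
    by (simp add: prod_ennreal prod_dividef)
  finally show ?thesis
    by (simp add: measure_def prod_nonneg)
qed

end

fun greedy_prod :: "real \<Rightarrow> nat \<Rightarrow> nat \<Rightarrow> nat \<Rightarrow> nat" where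
  "greedy_prod a lo hi 0 = 1"
| "greedy_prod a lo hi (Suc n) =
     greedy_prod a lo hi n * (if real (greedy_prod a lo hi n) < a ^ n then hi else lo)"

definition greedy_digit :: "real \<Rightarrow> nat \<Rightarrow> nat \<Rightarrow> nat \<Rightarrow> nat" where
  "greedy_digit a lo hi n = (if real (greedy_prod a lo hi n) < a ^ n then hi else lo)"

lemma greedy_prod_eq_prod: "greedy_prod a lo hi n = (\<Prod>i<n. greedy_digit a lo hi i)"
  by (induction n) (auto simp: greedy_digit_def)

lemma greedy_prod_bounds:
  assumes "1 \<le> lo" "real lo \<le> a" "a \<le> real hi"
  shows "real lo * a ^ n \<le> a * greedy_prod a lo hi n \<and> a * greedy_prod a lo hi n \<le> real hi * a ^ n"
proof (induction n)
  case 0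
  then show ?case using assms by simp
next
  case (Suc n)
  let ?N = "real (greedy_prod a lo hi n)"
  have "0 < a" "0 \<le> ?N" using assms by auto
  show ?case
  proof (cases "?N < a ^ n")
    case True
    have "real lo * a ^ Suc n \<le> a * (a * ?N)"
      using Suc.IH \<open>0 < a\<close> by (simp add: mult.left_commute)
    also have "\<dots> \<le> a * (real hi * ?N)"
      using assms \<open>0 < a\<close> \<open>0 \<le> ?N\<close> by (intro mult_left_mono mult_right_mono) auto
    finally have "real lo * a ^ Suc n \<le> a * (real hi * ?N)" .
    moreover have "a * (real hi * ?N) \<le> real hi * a ^ Suc n"
      using True \<open>0 < a\<close> assms by (simp add: mult.left_commute)
    ultimately show ?thesis
      using True by (simp add: ac_simps)
  next
    case False
    have "real lo * a ^ n \<le> real lo * ?N"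
      using False by (intro mult_left_mono) auto
    then have "real lo * a ^ Suc n \<le> a * (real lo * ?N)"
      using \<open>0 < a\<close> by (simp add: mult.left_commute)
    moreover have "a * (real lo * ?N) \<le> a * (a * ?N)"
      using assms \<open>0 < a\<close> \<open>0 \<le> ?N\<close> by (intro mult_left_mono mult_right_mono) auto
    moreover have "\<dots> \<le> real hi * a ^ Suc n"
      using Suc.IH \<open>0 < a\<close> by (simp add: mult.left_commute)
    ultimately show ?thesis
      using False by (simp add: ac_simps)
  qed
qed

lemma greedy_prod_pos: "0 < lo \<Longrightarrow> 0 < hi \<Longrightarrow> 0 < greedy_prod a lo hi n"
  by (induction n) auto

lemma greedy_prod_ratio_bounds:
  assumes "1 \<le> lo" "real lo \<le> a" "a \<le> real hi"
  shows "a / hi \<le> a ^ n / greedy_prod a lo hi n \<and> a ^ n / greedy_prod a lo hi n \<le> a / lo"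
proof -
  have "0 < real (greedy_prod a lo hi n)" "0 < real hi"
    using assms greedy_prod_pos[of lo hi a n] by auto
  then show ?thesis
    using greedy_prod_bounds[OF assms, of n] assms by (simp add: divide_simps mult.commute)
qed

lemma AE_greedy_digit_measure_density:
  assumes m: "0 < m" and lo: "1 \<le> lo" "real lo \<le> a" and hi: "a \<le> real hi" "hi \<le> m"
  defines "\<mu> \<equiv> digit_measure m (greedy_digit a lo hi)"
  shows "AE x in \<mu>. \<forall>n. a / hi \<le> a ^ n * measure \<mu> (cyl m n x) \<and> a ^ n * measure \<mu> (cyl m n x) \<le> a / lo"
proof -
  let ?k = "greedy_digit a lo hi"
  have digits: "0 < ?k i" "?k i \<le> m" for i
    using lo hi by (auto simp: greedy_digit_def)
  have pointwise: "a / hi \<le> a ^ n * measure \<mu> (cyl m n x) \<and> a ^ n * measure \<mu> (cyl m n x) \<le> a / lo"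
    if "x \<in> space \<mu>" "\<forall>i. x i < ?k i" for x n
  proof -
    have "a ^ n * measure \<mu> (cyl m n x) = a ^ n / greedy_prod a lo hi n"
      using that by (simp add: \<mu>_def space_digit_measure measure_digit_measure_cyl[of m ?k, OF m digits]
          greedy_prod_eq_prod)
    then show ?thesis
      using greedy_prod_ratio_bounds[OF lo hi(1), of n] by simp
  qed
  have digits_AE: "AE x in \<mu>. \<forall>i. x i < ?k i"
    unfolding \<mu>_def by (rule AE_digit_measure_digits[of m ?k, OF m digits])
  show ?thesis
    by (rule AE_mp[OF digits_AE AE_I2]) (use pointwise in blast)
qed

theorem theorem2:
  fixes m :: nat and \<alpha> :: real
  assumes "m \<ge> 2" and "0 < \<alpha>" and "\<alpha> < 1"
  shows "\<exists>\<mu> :: (nat \<Rightarrow> nat) measure.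
           space \<mu> = seqspace m \<and> sets \<mu> = borelT m \<and>
           emeasure \<mu> (seqspace m) < \<infinity> \<and> emeasure \<mu> (seqspace m) \<noteq> 0 \<and>
           esssup \<mu> (upper_density m \<mu> \<alpha>) < \<infinity> \<and>
           essinf \<mu> (lower_density m \<mu> \<alpha>) > 0 \<and>
           Cconst m \<mu> \<alpha> \<le> real_of_int \<lceil>real m powr \<alpha>\<rceil> / real_of_int \<lfloor>real m powr \<alpha>\<rfloor>"
proof -
  define a where "a = real m powr \<alpha>"
  define lo where "lo = nat \<lfloor>a\<rfloor>"
  define hi where "hi = nat \<lceil>a\<rceil>"
  define \<mu> where "\<mu> = digit_measure m (greedy_digit a lo hi)"
  have m: "0 < m" using assms by simp
  have "1 < a" "a < real m"
    unfolding a_def using assms powr_less_mono[of 0 \<alpha> "real m"] powr_less_mono[of \<alpha> 1 "real m"]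
    by auto
  then have lo: "1 \<le> lo" "real lo \<le> a" and hi: "a \<le> real hi" "hi \<le> m"
    unfolding lo_def hi_def by (auto simp: le_nat_iff le_floor_iff ceiling_le_iff nat_le_iff)
  have space: "space \<mu> = seqspace m" and sets: "sets \<mu> = borelT m"
    by (simp_all add: \<mu>_def space_digit_measure sets_digit_measure)
  have "real m powr (\<alpha> * real n) = a ^ n" for n
    using m \<open>1 < a\<close> powr_realpow[of a n] by (simp add: a_def powr_powr)
  then have "AE x in \<mu>. \<forall>n. a / hi \<le> real m powr (\<alpha> * real n) * measure \<mu> (cyl m n x) \<and>
                             real m powr (\<alpha> * real n) * measure \<mu> (cyl m n x) \<le> a / lo"
    using AE_greedy_digit_measure_density[OF m lo hi] unfolding \<mu>_def by simp
  note bounds = essential_density_bounds[OF m space sets this]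
  have "0 < a / hi" "a / hi \<le> a / lo" "(a / lo) / (a / hi) = hi / lo"
    using \<open>1 < a\<close> lo hi by (auto intro: divide_left_mono)
  moreover have "emeasure \<mu> (seqspace m) = 1"
    by (simp add: \<mu>_def emeasure_digit_measure_space[OF m])
  ultimately show ?thesis
    using bounds space sets \<open>1 < a\<close> by (intro exI[of _ \<mu>]) (simp add: lo_def hi_def a_def)
qed

end
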